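(* For every $L>0$, $n\ge1$ and $w\in\mathbb{R}$, $\mathcal{L}_{\mathrm{sig}}(w;D(\mathcal{F}^{+}_L))\ge\frac12\,\mathcal{L}_{\mathrm{sig}}(w;D(\mathcal{F}^{\mathrm{aff}}_L))$.
   Context: $(z)_+=\max(z,0)$; $\mathcal{U}^d$ is the uniform distribution on $\mathbb{S}^{d-1}$. $D(\mathcal{F}^{\mathrm{aff}}_L)$ is the distribution of $f(\mathbf{x})=l\,\mathbf{w}^\top\mathbf{x}+b$ with $\mathbf{w}\sim\mathcal{U}^d$, $l,b$ i.i.d. $\mathrm{Unif}([-L,L])$; $D(\mathcal{F}^+_L)$ is the distribution of $f(\mathbf{x})=l_1(\mathbf{w}^\top\mathbf{x})_++l_2(-\mathbf{w}^\top\mathbf{x})_++b$ with $\mathbf{w}\sim\mathcal{U}^d$ and $l_1,l_2,b$ i.i.d. $\mathrm{Unif}([-L,L])$ (all independent). For a task distribution $D$ and $w\in\mathbb{R}$, the signal term is $\mathcal{L}_{\mathrm{sig}}(w;D)=\mathbb{E}\Big[\Big(\frac{\sum_{i=1}^n(f(\mathbf{x}_i)-f(\mathbf{x}_{n+1}))e^{-w\|\mathbf{x}_i-\mathbf{x}_{n+1}\|^2}}{\sum_{j=1}^n e^{-w\|\mathbf{x}_j-\mathbf{x}_{n+1}\|^2}}\Big)^2\Big]$, where $f\sim D$ and $\mathbf{x}_1,\dots,\mathbf{x}_{n+1}$ i.i.d. $\sim\mathcal{U}^d$ independent of $f$. *)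

theory Defs
  imports "HOL-Probability.Probability"
begin

(* Uniform distribution U^d on the unit sphere S^{d-1} of real^'d (d = CARD('d)):
   the normalized (cone) surface measure, i.e. the law of x/|x| for x uniform on the unit ball. *)
definition sphere_unif :: "(real ^ 'd) measure" where
  "sphere_unif = distr (uniform_measure lborel (ball 0 1)) borel (\<lambda>x. x /\<^sub>R norm x)"

definition interval_unif :: "real \<Rightarrow> real measure" where
  "interval_unif L = uniform_measure lborel {-L..L}"

definition aff_params :: "real \<Rightarrow> ((real ^ 'd) \<times> real \<times> real) measure" where
  "aff_params L = sphere_unif \<Otimes>\<^sub>M (interval_unif L \<Otimes>\<^sub>M interval_unif L)"

definition aff_fun :: "(real ^ 'd) \<times> real \<times> real \<Rightarrow> real ^ 'd \<Rightarrow> real" where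
  "aff_fun p x = (case p of (v, l, b) \<Rightarrow> l * (v \<bullet> x) + b)"

definition plus_params :: "real \<Rightarrow> ((real ^ 'd) \<times> real \<times> real \<times> real) measure" where
  "plus_params L = sphere_unif \<Otimes>\<^sub>M (interval_unif L \<Otimes>\<^sub>M (interval_unif L \<Otimes>\<^sub>M interval_unif L))"

definition plus_fun :: "(real ^ 'd) \<times> real \<times> real \<times> real \<Rightarrow> real ^ 'd \<Rightarrow> real" where
  "plus_fun p x = (case p of (v, l1, l2, b) \<Rightarrow>
      l1 * max (v \<bullet> x) 0 + l2 * max (- (v \<bullet> x)) 0 + b)"

(* Signal term L_sig(w; D), where D is the law of F p with p ~ P;
   xs i for i in {1..n+1} are i.i.d. uniform on the sphere, independent of p. *)
definition sig_loss :: "nat \<Rightarrow> real \<Rightarrow> 'p measure \<Rightarrow> ('p \<Rightarrow> real ^ 'd \<Rightarrow> real) \<Rightarrow> real" where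
  "sig_loss n w P F =
     (\<integral>(p, xs). ((\<Sum>i=1..n. (F p (xs i) - F p (xs (Suc n))) * exp (- w * (norm (xs i - xs (Suc n)))\<^sup>2))
                   / (\<Sum>j=1..n. exp (- w * (norm (xs j - xs (Suc n)))\<^sup>2)))\<^sup>2
      \<partial>(P \<Otimes>\<^sub>M (\<Pi>\<^sub>M i\<in>{1..Suc n}. (sphere_unif :: (real ^ 'd) measure))))"

end

theory Submission imports Defs "HOL-Analysis.Ball_Volume" begin

text \<open>For a fixed direction \<open>v\<close> and fixed sample points the signal residual is linear in \<open>f\<close>
  and blind to constants. With \<open>r\<^sub>+\<close>, \<open>r\<^sub>-\<close> the residuals of the ramps \<open>(v \<bullet> x)\<^sub>+\<close> and
  \<open>(-v \<bullet> x)\<^sub>+\<close>, a function of \<open>F\<^sup>+\<^sub>L\<close> has residual \<open>l\<^sub>1 r\<^sub>+ + l\<^sub>2 r\<^sub>-\<close>, while the affine function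
  \<open>l (v \<bullet> x) + b\<close> has residual \<open>l (r\<^sub>+ - r\<^sub>-)\<close>. Averaging the squares over independent uniform slopes
  (mean 0, second moment \<open>L\<^sup>2/3\<close>) gives \<open>L\<^sup>2/3 (r\<^sub>+\<^sup>2 + r\<^sub>-\<^sup>2)\<close> and \<open>L\<^sup>2/3 (r\<^sub>+ - r\<^sub>-)\<^sup>2\<close>
  respectively, and \<open>(a - b)\<^sup>2 \<le> 2 (a\<^sup>2 + b\<^sup>2)\<close>.\<close>

lemma emeasure_unit_ball_nonzero: "emeasure (lborel :: (real^'d) measure) (ball 0 1) \<noteq> 0"
proof -
  have "unit_ball_vol (real CARD('d)) > 0" by (rule unit_ball_vol_pos) simp
  then show ?thesis by (simp add: emeasure_ball del: unit_ball_vol_pos)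
qed

lemma prob_space_sphere_unif: "prob_space (sphere_unif :: (real^'d) measure)"
  unfolding sphere_unif_def
proof (rule prob_space.prob_space_distr)
  show "prob_space (uniform_measure lborel (ball (0 :: real^'d) 1))"
    using emeasure_unit_ball_nonzero emeasure_lborel_ball_finite[of "0::real^'d" 1]
    by (intro prob_space_uniform_measure) auto
qed simp

lemma prob_space_interval_unif: "L > 0 \<Longrightarrow> prob_space (interval_unif L)"
  unfolding interval_unif_def by (rule prob_space_uniform_measure) auto

lemma sets_sphere_unif[measurable_cong]: "sets (sphere_unif :: (real^'d) measure) = sets borel"
  unfolding sphere_unif_def by simp

lemma sets_interval_unif[measurable_cong]: "sets (interval_unif L) = sets borel"
  unfolding interval_unif_def by simp

lemma AE_sphere_unif_norm_le_1: "AE x in (sphere_unif :: (real^'d) measure). norm x \<le> 1"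
proof -
  have "norm (x /\<^sub>R norm x) \<le> 1" for x :: "real^'d"
    by (cases "x = 0") auto
  then show ?thesis
    unfolding sphere_unif_def by (subst AE_distr_iff) auto
qed

lemma AE_PiM_sphere_unif_norm_le_1:
  assumes "finite I"
  shows "AE xs in (\<Pi>\<^sub>M i\<in>I. (sphere_unif :: (real^'d) measure)). \<forall>i\<in>I. norm (xs i) \<le> 1"
  using assms
proof (rule AE_finite_allI)
  show "AE xs in (\<Pi>\<^sub>M i\<in>I. (sphere_unif :: (real^'d) measure)). norm (xs i) \<le> 1" if "i \<in> I" for i
    using AE_PiM_component[OF prob_space_sphere_unif that AE_sphere_unif_norm_le_1] .
qed

lemma has_integral_quadratic_interval:
  fixes a b c L :: real
  assumes "L > 0"
  shows "((\<lambda>l. a + b*l + c*l\<^sup>2) has_integral (2*a*L + 2*c*L^3/3)) {-L..L}"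
proof -
  have "((\<lambda>l. a + b*l + c*l\<^sup>2) has_integral
     ((a*L + b*L\<^sup>2/2 + c*L^3/3) - (a*(-L) + b*(-L)\<^sup>2/2 + c*(-L)^3/3))) {-L..L}"
    using assms
    by (intro fundamental_theorem_of_calculus)
       (auto intro!: derivative_eq_intros simp: has_real_derivative_iff_has_vector_derivative[symmetric])
  moreover have "(a*L + b*L\<^sup>2/2 + c*L^3/3) - (a*(-L) + b*(-L)\<^sup>2/2 + c*(-L)^3/3) = 2*a*L + 2*c*L^3/3"
    by (simp add: power3_eq_cube power2_eq_square algebra_simps)
  ultimately show ?thesis by (simp only:)
qed

lemma nn_integral_interval_unif_quadratic:
  fixes a b c L :: real
  assumes L: "L > 0" and nonneg: "\<And>l. 0 \<le> a + b*l + c*l\<^sup>2"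
  shows "(\<integral>\<^sup>+ l. ennreal (a + b*l + c*l\<^sup>2) \<partial>interval_unif L) = ennreal (a + c*L\<^sup>2/3)"
proof -
  note int = has_integral_quadratic_interval[OF L, of a b c]
  have "(\<integral>\<^sup>+ l. ennreal (a + b*l + c*l\<^sup>2) \<partial>interval_unif L)
      = (\<integral>\<^sup>+ l. ennreal (a + b*l + c*l\<^sup>2) * indicator {-L..L} l \<partial>lborel) / emeasure lborel {-L..L}"
    unfolding interval_unif_def by (rule nn_integral_uniform_measure) auto
  also have "\<dots> = ennreal (2*a*L + 2*c*L^3/3) / ennreal (2*L)"
    using L by (simp add: nn_integral_has_integral_lebesgue'[OF nonneg int])
  also have "\<dots> = ennreal ((2*a*L + 2*c*L^3/3) / (2*L))"
    using has_integral_nonneg[OF int] nonneg L by (intro divide_ennreal) auto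
  also have "(2*a*L + 2*c*L^3/3) / (2*L) = a + c*L\<^sup>2/3"
    using L by (simp add: field_simps power2_eq_square power3_eq_cube)
  finally show ?thesis .
qed

lemma nn_integral_interval_unif_sq_scaled:
  assumes L: "L > 0"
  shows "(\<integral>\<^sup>+p. ennreal ((fst p * A)\<^sup>2) \<partial>(interval_unif L \<Otimes>\<^sub>M interval_unif L)) = ennreal (L\<^sup>2/3 * A\<^sup>2)"
proof -
  interpret I: prob_space "interval_unif L" using prob_space_interval_unif[OF L] .
  have "(\<integral>\<^sup>+p. ennreal ((fst p * A)\<^sup>2) \<partial>(interval_unif L \<Otimes>\<^sub>M interval_unif L))
     = (\<integral>\<^sup>+l. \<integral>\<^sup>+b. ennreal ((l * A)\<^sup>2) \<partial>interval_unif L \<partial>interval_unif L)"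
    using I.nn_integral_fst[of "\<lambda>p. ennreal ((fst p * A)\<^sup>2)"] by simp
  also have "\<dots> = (\<integral>\<^sup>+l. ennreal (0 + 0*l + A\<^sup>2*l\<^sup>2) \<partial>interval_unif L)"
    by (simp add: I.emeasure_space_1 power_mult_distrib mult.commute)
  also have "\<dots> = ennreal (L\<^sup>2/3 * A\<^sup>2)"
    by (subst nn_integral_interval_unif_quadratic[OF L]) auto
  finally show ?thesis .
qed

lemma nn_integral_interval_unif_sq_lincomb:
  assumes L: "L > 0"
  shows "(\<integral>\<^sup>+p. ennreal ((fst p * A + fst (snd p) * B)\<^sup>2)
            \<partial>(interval_unif L \<Otimes>\<^sub>M (interval_unif L \<Otimes>\<^sub>M interval_unif L)))
       = ennreal (L\<^sup>2/3 * (A\<^sup>2 + B\<^sup>2))"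
proof -
  interpret I: prob_space "interval_unif L" using prob_space_interval_unif[OF L] .
  interpret I2: prob_space "interval_unif L \<Otimes>\<^sub>M interval_unif L"
    by (intro prob_space_pair I.prob_space_axioms)
  have "(\<integral>\<^sup>+p. ennreal ((fst p * A + fst (snd p) * B)\<^sup>2)
            \<partial>(interval_unif L \<Otimes>\<^sub>M (interval_unif L \<Otimes>\<^sub>M interval_unif L)))
     = (\<integral>\<^sup>+l1. \<integral>\<^sup>+q. ennreal ((l1 * A + fst q * B)\<^sup>2)
            \<partial>(interval_unif L \<Otimes>\<^sub>M interval_unif L) \<partial>interval_unif L)"
    using I2.nn_integral_fst[of "\<lambda>p. ennreal ((fst p * A + fst (snd p) * B)\<^sup>2)"] by simp
  also have "\<dots> = (\<integral>\<^sup>+l1. \<integral>\<^sup>+l2. ennreal ((l1*A)\<^sup>2 + (2*l1*A*B)*l2 + B\<^sup>2*l2\<^sup>2) \<partial>interval_unif L \<partial>interval_unif L)"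
  proof (rule nn_integral_cong)
    fix l1
    have "(\<integral>\<^sup>+q. ennreal ((l1 * A + fst q * B)\<^sup>2) \<partial>(interval_unif L \<Otimes>\<^sub>M interval_unif L))
        = (\<integral>\<^sup>+l2. \<integral>\<^sup>+b. ennreal ((l1 * A + l2 * B)\<^sup>2) \<partial>interval_unif L \<partial>interval_unif L)"
      using I.nn_integral_fst[of "\<lambda>q. ennreal ((l1 * A + fst q * B)\<^sup>2)"] by simp
    then show "(\<integral>\<^sup>+q. ennreal ((l1 * A + fst q * B)\<^sup>2) \<partial>(interval_unif L \<Otimes>\<^sub>M interval_unif L))
        = (\<integral>\<^sup>+l2. ennreal ((l1*A)\<^sup>2 + (2*l1*A*B)*l2 + B\<^sup>2*l2\<^sup>2) \<partial>interval_unif L)"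
      by (simp add: I.emeasure_space_1 power2_eq_square algebra_simps)
  qed
  also have "\<dots> = (\<integral>\<^sup>+l1. ennreal (B\<^sup>2*L\<^sup>2/3 + 0*l1 + A\<^sup>2*l1\<^sup>2) \<partial>interval_unif L)"
  proof (rule nn_integral_cong)
    fix l1
    have "(l1*A)\<^sup>2 + (2*l1*A*B)*l2 + B\<^sup>2*l2\<^sup>2 = (l1*A + l2*B)\<^sup>2" for l2
      by (simp add: power2_eq_square algebra_simps)
    then show "(\<integral>\<^sup>+l2. ennreal ((l1*A)\<^sup>2 + (2*l1*A*B)*l2 + B\<^sup>2*l2\<^sup>2) \<partial>interval_unif L)
        = ennreal (B\<^sup>2*L\<^sup>2/3 + 0*l1 + A\<^sup>2*l1\<^sup>2)"
      by (subst nn_integral_interval_unif_quadratic[OF L]) (auto simp: power_mult_distrib algebra_simps)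
  qed
  also have "\<dots> = ennreal (L\<^sup>2/3 * (A\<^sup>2 + B\<^sup>2))"
    by (subst nn_integral_interval_unif_quadratic[OF L]) (auto simp: algebra_simps)
  finally show ?thesis .
qed

definition kernel_residual :: "nat \<Rightarrow> real \<Rightarrow> ('a::real_normed_vector \<Rightarrow> real) \<Rightarrow> (nat \<Rightarrow> 'a) \<Rightarrow> real" where
  "kernel_residual n w g xs =
     (\<Sum>i=1..n. (g (xs i) - g (xs (Suc n))) * exp (- w * (norm (xs i - xs (Suc n)))\<^sup>2))
       / (\<Sum>j=1..n. exp (- w * (norm (xs j - xs (Suc n)))\<^sup>2))"

lemma kernel_residual_lincomb:
  "kernel_residual n w (\<lambda>x. \<alpha> * g1 x + \<beta> * g2 x + \<gamma>) xs
     = \<alpha> * kernel_residual n w g1 xs + \<beta> * kernel_residual n w g2 xs"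
proof -
  define e where "e i = exp (- w * (norm (xs i - xs (Suc n)))\<^sup>2)" for i
  have "(\<Sum>i=1..n. ((\<alpha> * g1 (xs i) + \<beta> * g2 (xs i) + \<gamma>) - (\<alpha> * g1 (xs (Suc n)) + \<beta> * g2 (xs (Suc n)) + \<gamma>)) * e i)
     = \<alpha> * (\<Sum>i=1..n. (g1 (xs i) - g1 (xs (Suc n))) * e i) + \<beta> * (\<Sum>i=1..n. (g2 (xs i) - g2 (xs (Suc n))) * e i)"
    by (simp add: sum_distrib_left sum.distrib[symmetric] algebra_simps)
  then show ?thesis unfolding kernel_residual_def e_def[symmetric]
    by (simp add: add_divide_distrib)
qed

text \<open>The residual is a convex combination of the differences \<open>g (xs i) - g (xs (Suc n))\<close>;
  for \<open>n = 0\<close> the normalising sum is empty.\<close>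

lemma abs_kernel_residual_le:
  assumes "n \<ge> 1" and "\<And>i. i \<in> {1..n} \<Longrightarrow> \<bar>g (xs i) - g (xs (Suc n))\<bar> \<le> M"
  shows "\<bar>kernel_residual n w g xs\<bar> \<le> M"
proof -
  define e where "e i = exp (- w * (norm (xs i - xs (Suc n)))\<^sup>2)" for i
  have pos: "(\<Sum>j=1..n. e j) > 0" using assms(1) by (intro sum_pos) (auto simp: e_def)
  have "\<bar>\<Sum>i=1..n. (g (xs i) - g (xs (Suc n))) * e i\<bar> \<le> (\<Sum>i=1..n. \<bar>g (xs i) - g (xs (Suc n))\<bar> * e i)"
    using sum_abs[of "\<lambda>i. (g (xs i) - g (xs (Suc n))) * e i"] by (simp add: abs_mult e_def)
  also have "\<dots> \<le> (\<Sum>i=1..n. M * e i)"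
    using assms(2) by (intro sum_mono mult_right_mono) (auto simp: e_def)
  also have "\<dots> = M * (\<Sum>j=1..n. e j)" by (simp add: sum_distrib_left)
  finally show ?thesis unfolding kernel_residual_def e_def[symmetric] using pos
    by (simp add: abs_div divide_le_eq)
qed

definition ramp_residual :: "nat \<Rightarrow> real \<Rightarrow> 'a::real_inner \<Rightarrow> (nat \<Rightarrow> 'a) \<Rightarrow> real" where
  "ramp_residual n w v xs = kernel_residual n w (\<lambda>x. max (v \<bullet> x) 0) xs"

lemma kernel_residual_plus_fun:
  "kernel_residual n w (plus_fun (v, l1, l2, b)) xs
     = l1 * ramp_residual n w v xs + l2 * ramp_residual n w (- v) xs"
proof -
  have "plus_fun (v, l1, l2, b) = (\<lambda>x. l1 * max (v \<bullet> x) 0 + l2 * max ((- v) \<bullet> x) 0 + b)"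
    by (simp add: plus_fun_def fun_eq_iff)
  then show ?thesis by (simp add: kernel_residual_lincomb ramp_residual_def)
qed

lemma kernel_residual_aff_fun:
  "kernel_residual n w (aff_fun (v, l, b)) xs
     = l * (ramp_residual n w v xs - ramp_residual n w (- v) xs)"
proof -
  have "aff_fun (v, l, b) = (\<lambda>x. l * max (v \<bullet> x) 0 + (- l) * max ((- v) \<bullet> x) 0 + b)"
    by (auto simp: aff_fun_def fun_eq_iff max_def algebra_simps)
  then have "kernel_residual n w (aff_fun (v, l, b)) xs
      = l * ramp_residual n w v xs + (- l) * ramp_residual n w (- v) xs"
    by (simp only: kernel_residual_lincomb ramp_residual_def)
  then show ?thesis by (simp add: algebra_simps)
qed

lemma abs_ramp_residual_le_1:
  fixes v :: "'a::real_inner"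
  assumes "n \<ge> 1" and "norm v \<le> 1" and "\<And>i. i \<in> {1..Suc n} \<Longrightarrow> norm (xs i) \<le> 1"
  shows "\<bar>ramp_residual n w v xs\<bar> \<le> 1"
  unfolding ramp_residual_def
proof (rule abs_kernel_residual_le[OF assms(1)])
  have ramp_bounds: "0 \<le> max (v \<bullet> xs i) 0 \<and> max (v \<bullet> xs i) 0 \<le> 1" if "i \<in> {1..Suc n}" for i
  proof -
    have "\<bar>v \<bullet> xs i\<bar> \<le> norm v * norm (xs i)" by (rule Cauchy_Schwarz_ineq2)
    also have "\<dots> \<le> 1" using assms(2) assms(3)[OF that] by (intro mult_le_one) auto
    finally show ?thesis by auto
  qed
  show "\<bar>max (v \<bullet> xs i) 0 - max (v \<bullet> xs (Suc n)) 0\<bar> \<le> 1" if "i \<in> {1..n}" for i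
    using ramp_bounds[of i] ramp_bounds[of "Suc n"] that by auto
qed

lemma nn_integral_regroup_pair:
  assumes S: "sigma_finite_measure S" and T: "sigma_finite_measure T" and X: "sigma_finite_measure X"
    and [measurable]: "G \<in> borel_measurable ((S \<Otimes>\<^sub>M T) \<Otimes>\<^sub>M X)"
  shows "(\<integral>\<^sup>+z. G z \<partial>((S \<Otimes>\<^sub>M T) \<Otimes>\<^sub>M X)) = (\<integral>\<^sup>+y. \<integral>\<^sup>+p. G ((fst y, p), snd y) \<partial>T \<partial>(S \<Otimes>\<^sub>M X))"
proof -
  interpret S: sigma_finite_measure S by fact
  interpret T: sigma_finite_measure T by fact
  interpret X: sigma_finite_measure X by fact
  interpret TX: pair_sigma_finite T X by unfold_locales
  have "(\<integral>\<^sup>+z. G z \<partial>((S \<Otimes>\<^sub>M T) \<Otimes>\<^sub>M X)) = (\<integral>\<^sup>+y. \<integral>\<^sup>+xs. G (y, xs) \<partial>X \<partial>(S \<Otimes>\<^sub>M T))"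
    by (rule X.nn_integral_fst[symmetric]) simp
  also have "\<dots> = (\<integral>\<^sup>+v. \<integral>\<^sup>+p. \<integral>\<^sup>+xs. G ((v, p), xs) \<partial>X \<partial>T \<partial>S)"
    by (rule T.nn_integral_fst[symmetric, where f = "\<lambda>y. \<integral>\<^sup>+xs. G (y, xs) \<partial>X", simplified]) measurable
  also have "\<dots> = (\<integral>\<^sup>+v. \<integral>\<^sup>+xs. \<integral>\<^sup>+p. G ((v, p), xs) \<partial>T \<partial>X \<partial>S)"
  proof (rule nn_integral_cong)
    fix v assume "v \<in> space S"
    then show "(\<integral>\<^sup>+p. \<integral>\<^sup>+xs. G ((v, p), xs) \<partial>X \<partial>T) = (\<integral>\<^sup>+xs. \<integral>\<^sup>+p. G ((v, p), xs) \<partial>T \<partial>X)"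
      by (intro TX.Fubini[where f = "\<lambda>(p, xs). G ((v, p), xs)", simplified, symmetric]) measurable
  qed
  also have "\<dots> = (\<integral>\<^sup>+y. \<integral>\<^sup>+p. G ((fst y, p), snd y) \<partial>T \<partial>(S \<Otimes>\<^sub>M X))"
    by (rule X.nn_integral_fst[where f = "\<lambda>y. \<integral>\<^sup>+p. G ((fst y, p), snd y) \<partial>T", simplified]) measurable
  finally show ?thesis .
qed

abbreviation sphere_samples :: "nat \<Rightarrow> (nat \<Rightarrow> real^'d) measure" where
  "sphere_samples n \<equiv> \<Pi>\<^sub>M i\<in>{1..Suc n}. sphere_unif"

lemma sig_loss_sphere_product:
  fixes T :: "'p measure" and F :: "(real^'d) \<times> 'p \<Rightarrow> real^'d \<Rightarrow> real"
    and h :: "(real^'d) \<times> (nat \<Rightarrow> real^'d) \<Rightarrow> real"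
  assumes T: "sigma_finite_measure T"
    and R: "(\<lambda>z. kernel_residual n w (F (fst z)) (snd z))
                         \<in> borel_measurable ((sphere_unif \<Otimes>\<^sub>M T) \<Otimes>\<^sub>M sphere_samples n)"
    and [measurable]: "h \<in> borel_measurable (sphere_unif \<Otimes>\<^sub>M sphere_samples n)"
    and h_nonneg: "\<And>y. 0 \<le> h y"
    and h_average: "\<And>v xs. (\<integral>\<^sup>+p. ennreal ((kernel_residual n w (F (v, p)) xs)\<^sup>2) \<partial>T) = ennreal (h (v, xs))"
  shows "sig_loss n w (sphere_unif \<Otimes>\<^sub>M T) F = (\<integral>y. h y \<partial>(sphere_unif \<Otimes>\<^sub>M sphere_samples n))"
proof -
  interpret S: prob_space "sphere_unif :: (real^'d) measure" by (rule prob_space_sphere_unif)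
  interpret X: prob_space "sphere_samples n :: (nat \<Rightarrow> real^'d) measure"
    by (intro prob_space_PiM prob_space_sphere_unif)
  note R_sq = borel_measurable_power[OF R, of 2]
  have "sig_loss n w (sphere_unif \<Otimes>\<^sub>M T) F
      = (\<integral>z. (kernel_residual n w (F (fst z)) (snd z))\<^sup>2 \<partial>((sphere_unif \<Otimes>\<^sub>M T) \<Otimes>\<^sub>M sphere_samples n))"
    by (simp add: sig_loss_def kernel_residual_def case_prod_beta')
  also have "\<dots> = enn2real (\<integral>\<^sup>+z. ennreal ((kernel_residual n w (F (fst z)) (snd z))\<^sup>2)
                      \<partial>((sphere_unif \<Otimes>\<^sub>M T) \<Otimes>\<^sub>M sphere_samples n))"
    by (rule integral_eq_nn_integral[OF R_sq]) simp
  also have "\<dots> = enn2real (\<integral>\<^sup>+y. ennreal (h y) \<partial>(sphere_unif \<Otimes>\<^sub>M sphere_samples n))"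
    by (subst nn_integral_regroup_pair[OF S.sigma_finite_measure_axioms T X.sigma_finite_measure_axioms
          measurable_compose[OF R_sq measurable_ennreal]]) (simp add: h_average)
  also have "\<dots> = (\<integral>y. h y \<partial>(sphere_unif \<Otimes>\<^sub>M sphere_samples n))"
    by (rule integral_eq_nn_integral[symmetric]) (measurable, simp add: h_nonneg)
  finally show ?thesis .
qed

lemma borel_measurable_ramp_residual:
  fixes f :: "real^'d \<Rightarrow> real^'d"
  assumes [measurable]: "f \<in> borel_measurable borel"
  shows "(\<lambda>y. ramp_residual n w (f (fst y)) (snd y)) \<in> borel_measurable (sphere_unif \<Otimes>\<^sub>M sphere_samples n)"
  unfolding ramp_residual_def kernel_residual_def by measurable

lemma sig_loss_plus_params:
  assumes L: "L > 0"
  shows "sig_loss n w (plus_params L) (plus_fun :: (real^'d) \<times> real \<times> real \<times> real \<Rightarrow> real^'d \<Rightarrow> real)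
       = (\<integral>y. L\<^sup>2/3 * ((ramp_residual n w (fst y) (snd y))\<^sup>2 + (ramp_residual n w (- fst y) (snd y))\<^sup>2)
            \<partial>((sphere_unif :: (real^'d) measure) \<Otimes>\<^sub>M sphere_samples n))"
  unfolding plus_params_def
proof (rule sig_loss_sphere_product)
  interpret I: prob_space "interval_unif L" using prob_space_interval_unif[OF L] .
  show "sigma_finite_measure (interval_unif L \<Otimes>\<^sub>M (interval_unif L \<Otimes>\<^sub>M interval_unif L))"
    by (intro prob_space_imp_sigma_finite prob_space_pair I.prob_space_axioms)
  show "(\<integral>\<^sup>+p. ennreal ((kernel_residual n w (plus_fun (v, p)) xs)\<^sup>2)
          \<partial>(interval_unif L \<Otimes>\<^sub>M (interval_unif L \<Otimes>\<^sub>M interval_unif L)))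
      = ennreal (L\<^sup>2/3 * ((ramp_residual n w (fst (v, xs)) (snd (v, xs)))\<^sup>2
                          + (ramp_residual n w (- fst (v, xs)) (snd (v, xs)))\<^sup>2))" for v :: "real^'d" and xs
  proof -
    have "kernel_residual n w (plus_fun (v, p)) xs
        = fst p * ramp_residual n w v xs + fst (snd p) * ramp_residual n w (- v) xs" for p
      by (cases p) (simp add: kernel_residual_plus_fun)
    then show ?thesis by (simp add: nn_integral_interval_unif_sq_lincomb[OF L])
  qed
  show "(\<lambda>y. L\<^sup>2/3 * ((ramp_residual n w (fst y) (snd y))\<^sup>2 + (ramp_residual n w (- fst y) (snd y))\<^sup>2))
      \<in> borel_measurable ((sphere_unif :: (real^'d) measure) \<Otimes>\<^sub>M sphere_samples n)"
    using borel_measurable_ramp_residual[of "\<lambda>v. v" n w] borel_measurable_ramp_residual[of uminus n w]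
    by (intro borel_measurable_times borel_measurable_add borel_measurable_power borel_measurable_const) auto
  show "0 \<le> L\<^sup>2/3 * ((ramp_residual n w (fst y) (snd y))\<^sup>2 + (ramp_residual n w (- fst y) (snd y))\<^sup>2)" for y
    by simp
qed (unfold kernel_residual_def plus_fun_def, measurable)

lemma sig_loss_aff_params:
  assumes L: "L > 0"
  shows "sig_loss n w (aff_params L) (aff_fun :: (real^'d) \<times> real \<times> real \<Rightarrow> real^'d \<Rightarrow> real)
       = (\<integral>y. L\<^sup>2/3 * (ramp_residual n w (fst y) (snd y) - ramp_residual n w (- fst y) (snd y))\<^sup>2
            \<partial>((sphere_unif :: (real^'d) measure) \<Otimes>\<^sub>M sphere_samples n))"
  unfolding aff_params_def
proof (rule sig_loss_sphere_product)
  interpret I: prob_space "interval_unif L" using prob_space_interval_unif[OF L] .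
  show "sigma_finite_measure (interval_unif L \<Otimes>\<^sub>M interval_unif L)"
    by (intro prob_space_imp_sigma_finite prob_space_pair I.prob_space_axioms)
  show "(\<integral>\<^sup>+p. ennreal ((kernel_residual n w (aff_fun (v, p)) xs)\<^sup>2) \<partial>(interval_unif L \<Otimes>\<^sub>M interval_unif L))
      = ennreal (L\<^sup>2/3 * (ramp_residual n w (fst (v, xs)) (snd (v, xs))
                           - ramp_residual n w (- fst (v, xs)) (snd (v, xs)))\<^sup>2)" for v :: "real^'d" and xs
  proof -
    have "kernel_residual n w (aff_fun (v, p)) xs
        = fst p * (ramp_residual n w v xs - ramp_residual n w (- v) xs)" for p
      by (cases p) (simp add: kernel_residual_aff_fun)
    then show ?thesis by (simp add: nn_integral_interval_unif_sq_scaled[OF L])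
  qed
  show "(\<lambda>y. L\<^sup>2/3 * (ramp_residual n w (fst y) (snd y) - ramp_residual n w (- fst y) (snd y))\<^sup>2)
      \<in> borel_measurable ((sphere_unif :: (real^'d) measure) \<Otimes>\<^sub>M sphere_samples n)"
    using borel_measurable_ramp_residual[of "\<lambda>v. v" n w] borel_measurable_ramp_residual[of uminus n w]
    by (intro borel_measurable_times borel_measurable_diff borel_measurable_power borel_measurable_const) auto
  show "0 \<le> L\<^sup>2/3 * (ramp_residual n w (fst y) (snd y) - ramp_residual n w (- fst y) (snd y))\<^sup>2" for y
    by simp
qed (unfold kernel_residual_def aff_fun_def, measurable)

lemma AE_abs_ramp_residuals_le_1:
  assumes "n \<ge> 1"
  shows "AE y in (sphere_unif :: (real^'d) measure) \<Otimes>\<^sub>M sphere_samples n.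
           \<bar>ramp_residual n w (fst y) (snd y)\<bar> \<le> 1 \<and> \<bar>ramp_residual n w (- fst y) (snd y)\<bar> \<le> 1"
proof -
  interpret S: prob_space "sphere_unif :: (real^'d) measure" by (rule prob_space_sphere_unif)
  interpret X: prob_space "sphere_samples n :: (nat \<Rightarrow> real^'d) measure"
    by (intro prob_space_PiM prob_space_sphere_unif)
  interpret SX: pair_sigma_finite "sphere_unif :: (real^'d) measure" "sphere_samples n :: (nat \<Rightarrow> real^'d) measure"
    by unfold_locales
  have "AE y in (sphere_unif :: (real^'d) measure) \<Otimes>\<^sub>M (sphere_samples n :: (nat \<Rightarrow> real^'d) measure).
          norm (fst y) \<le> 1 \<and> (\<forall>i\<in>{1..Suc n}. norm (snd y i) \<le> 1)"
  proof (rule SX.AE_pair_measure)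
    show "AE v in sphere_unif. AE xs in sphere_samples n.
            norm (fst (v, xs)) \<le> 1 \<and> (\<forall>i\<in>{1..Suc n}. norm (snd (v, xs) i) \<le> 1)"
      using AE_sphere_unif_norm_le_1
    proof eventually_elim
      case (elim v)
      with AE_PiM_sphere_unif_norm_le_1[of "{1..Suc n}"] show ?case by simp
    qed
  qed measurable
  then show ?thesis
    by eventually_elim (auto intro!: abs_ramp_residual_le_1[OF assms])
qed

lemma integral_sq_diff_le_twice_sum_sq:
  fixes a b :: "'a \<Rightarrow> real"
  assumes "finite_measure M" and [measurable]: "a \<in> borel_measurable M" "b \<in> borel_measurable M"
    and bounded: "AE y in M. \<bar>a y\<bar> \<le> B \<and> \<bar>b y\<bar> \<le> B"
  shows "(\<integral>y. (a y - b y)\<^sup>2 \<partial>M) \<le> 2 * (\<integral>y. (a y)\<^sup>2 + (b y)\<^sup>2 \<partial>M)"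
proof -
  interpret finite_measure M by fact
  have sq_bounds: "AE y in M. (a y - b y)\<^sup>2 \<le> (2 * B)\<^sup>2 \<and> (a y)\<^sup>2 + (b y)\<^sup>2 \<le> 2 * B\<^sup>2"
    using bounded
  proof eventually_elim
    case (elim y)
    have "\<bar>a y - b y\<bar>\<^sup>2 \<le> (2 * B)\<^sup>2" "\<bar>a y\<bar>\<^sup>2 \<le> B\<^sup>2" "\<bar>b y\<bar>\<^sup>2 \<le> B\<^sup>2"
      using elim by (intro power_mono; linarith)+
    then show ?case by simp
  qed
  have "integrable M (\<lambda>y. (a y - b y)\<^sup>2)"
    by (rule integrable_const_bound[where B = "(2 * B)\<^sup>2"]) (use sq_bounds in auto)
  moreover have "integrable M (\<lambda>y. 2 * ((a y)\<^sup>2 + (b y)\<^sup>2))"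
    by (rule integrable_const_bound[where B = "2 * (2 * B\<^sup>2)"]) (use sq_bounds in auto)
  moreover have "(a y - b y)\<^sup>2 \<le> 2 * ((a y)\<^sup>2 + (b y)\<^sup>2)" for y
    using zero_le_power2[of "a y + b y"] by (simp add: power2_eq_square algebra_simps)
  ultimately have "(\<integral>y. (a y - b y)\<^sup>2 \<partial>M) \<le> (\<integral>y. 2 * ((a y)\<^sup>2 + (b y)\<^sup>2) \<partial>M)"
    by (rule integral_mono)
  then show ?thesis by (simp only: integral_mult_right_zero)
qed

theorem mainTheorem10:
  fixes L w :: real and n :: nat
  assumes "L > 0" and "n \<ge> 1"
  shows "sig_loss n w (plus_params L) (plus_fun :: (real ^ 'd) \<times> real \<times> real \<times> real \<Rightarrow> real ^ 'd \<Rightarrow> real)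
         \<ge> 1 / 2 * sig_loss n w (aff_params L) (aff_fun :: (real ^ 'd) \<times> real \<times> real \<Rightarrow> real ^ 'd \<Rightarrow> real)"
proof -
  define M where "M = (sphere_unif :: (real^'d) measure) \<Otimes>\<^sub>M (sphere_samples n :: (nat \<Rightarrow> real^'d) measure)"
  define R where "R y = ramp_residual n w (fst y) (snd y)" for y :: "(real^'d) \<times> (nat \<Rightarrow> real^'d)"
  define R' where "R' y = ramp_residual n w (- fst y) (snd y)" for y :: "(real^'d) \<times> (nat \<Rightarrow> real^'d)"
  have "prob_space M"
    unfolding M_def by (intro prob_space_pair prob_space_PiM prob_space_sphere_unif)
  moreover have "R \<in> borel_measurable M" "R' \<in> borel_measurable M"
    using borel_measurable_ramp_residual[of "\<lambda>v. v" n w] borel_measurable_ramp_residual[of uminus n w]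
    by (simp_all add: M_def R_def[abs_def] R'_def[abs_def])
  moreover have "AE y in M. \<bar>R y\<bar> \<le> 1 \<and> \<bar>R' y\<bar> \<le> 1"
    unfolding M_def R_def R'_def by (rule AE_abs_ramp_residuals_le_1[OF \<open>n \<ge> 1\<close>])
  ultimately have "(\<integral>y. (R y - R' y)\<^sup>2 \<partial>M) \<le> 2 * (\<integral>y. (R y)\<^sup>2 + (R' y)\<^sup>2 \<partial>M)"
    by (intro integral_sq_diff_le_twice_sum_sq prob_space.finite_measure)
  then have "L\<^sup>2/3 * (\<integral>y. (R y - R' y)\<^sup>2 \<partial>M) \<le> L\<^sup>2/3 * (2 * (\<integral>y. (R y)\<^sup>2 + (R' y)\<^sup>2 \<partial>M))"
    by (rule mult_left_mono) simp
  then show ?thesis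
    unfolding sig_loss_plus_params[OF \<open>L > 0\<close>, of n w] sig_loss_aff_params[OF \<open>L > 0\<close>, of n w]
    by (simp add: M_def R_def R'_def)
qed

end
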